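(* For any traversal sequence $\tau$, metric $d$, and sequence of tasks $w^1,\dots,w^n$, let $C^{A2}$ be the total cost (processing plus transition cost) of the "follow the traversal" algorithm and $C^T$ the total cost (processing plus transition cost) of the fractional traversal algorithm on that task sequence. Then $C^{A2}\le 2\,C^T$.
   Context: A metrical task system has states $S=\{1,\dots,m\}$ and a symmetric non-negative matrix $(d_{st})$ with $d_{ss}=0$ satisfying the triangle inequality. A task is a vector $w\in\mathbb{R}_{\ge0}^m$. A traversal sequence is an infinite sequence $\tau=\tau_1,\tau_2,\dots$ of states. Write $\delta_{\ell,\ell'}=\delta_{\ell',\ell}=\sum_{j=\min(\ell,\ell')}^{\max(\ell,\ell')-1}d_{\tau_j\tau_{j+1}}$. Fractional traversal algorithm (FTA) on $\tau$: it keeps a position $j$ (initially $t_0=1$) and the work $\rho$ done at the current position since arriving (initially $0$). On a task $w$, with remaining fraction $f=1$, it repeats while $f>0$: $\lambda\gets\min\{(d_{\tau_j\tau_{j+1}}-\rho)/w_{\tau_j},f\}$ (interpreted as $f$ if $w_{\tau_j}=0$), $\rho\gets\rho+\lambda w_{\tau_j}$ (work done in state $\tau_j$), $f\gets f-\lambda$, and if $\rho=d_{\tau_j\tau_{j+1}}$ then $j\gets j+1,\rho\gets0$. Let $t_i$ be its position after task $i$. Its processing cost is the total work done and its transition cost is $\delta_{t_0,t_n}$. "Follow the traversal" algorithm: keeps a position $\ell_i$ in $\tau$, with $\ell_0=1$, and is run alongside the FTA on the same tasks. Given task $w^i$, let $j_{\min}=\min(\ell_{i-1},t_{i-1})$,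 $j_{\max}=\max(\ell_{i-1},t_{i-1})$, $D_0=\{j_{\min},\dots,j_{\max}\}$, and $\tilde c(j)=w^i_{\tau_j}$ if $j\in D_0$, $\tilde c(j)=w^i_{\tau_j}+\delta_{j_{\max},j}$ if $j>j_{\max}$, $\tilde c(j)=\infty$ otherwise. It sets $\ell_i\in\arg\min_{j\ge j_{\min}}\tilde c(j)$ (ties broken arbitrarily), moves to state $\tau_{\ell_i}$ and processes the whole task there, incurring cost $d_{\tau_{\ell_{i-1}}\tau_{\ell_i}}+w^i_{\tau_{\ell_i}}$. *)

theory Defs
  imports Complex_Main "HOL-Library.While_Combinator"
begin

text \<open>States form a finite type 's; the traversal is tau :: nat => 's, indexed from 1
  (tau 0 is irrelevant). delta l l' is the traversal distance between positions l and l'.\<close>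

definition delta :: "('s \<Rightarrow> 's \<Rightarrow> real) \<Rightarrow> (nat \<Rightarrow> 's) \<Rightarrow> nat \<Rightarrow> nat \<Rightarrow> real" where
  "delta d tau l l' = (\<Sum>j = min l l'..<max l l'. d (tau j) (tau (Suc j)))"

definition metric_ts :: "('s \<Rightarrow> 's \<Rightarrow> real) \<Rightarrow> bool" where
  "metric_ts d \<longleftrightarrow> (\<forall>s t. 0 \<le> d s t) \<and> (\<forall>s t. d s t = d t s) \<and> (\<forall>s. d s s = 0)
     \<and> (\<forall>s t u. d s u \<le> d s t + d t u)"

text \<open>One iteration of the inner loop of the fractional traversal algorithm (FTA).
  Configuration: (position j, work rho at current position, remaining fraction f,
  accumulated processing cost c).\<close>

definition fta_step :: "('s \<Rightarrow> 's \<Rightarrow> real) \<Rightarrow> (nat \<Rightarrow> 's) \<Rightarrow> ('s \<Rightarrow> real)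
    \<Rightarrow> nat \<times> real \<times> real \<times> real \<Rightarrow> nat \<times> real \<times> real \<times> real" where
  "fta_step d tau w cfg = (case cfg of (j, rho, f, c) \<Rightarrow>
     (let dj = d (tau j) (tau (Suc j));
          wj = w (tau j);
          lam = (if wj = 0 then f else min ((dj - rho) / wj) f);
          rho' = rho + lam * wj;
          f' = f - lam;
          c' = c + lam * wj
      in if rho' = dj then (Suc j, 0, f', c') else (j, rho', f', c')))"

text \<open>Processing one task: run the loop while f > 0, starting with f = 1.
  None if the loop does not terminate.\<close>

definition fta_task :: "('s \<Rightarrow> 's \<Rightarrow> real) \<Rightarrow> (nat \<Rightarrow> 's) \<Rightarrow> ('s \<Rightarrow> real)
    \<Rightarrow> nat \<times> real \<times> real \<Rightarrow> (nat \<times> real \<times> real) option" where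
  "fta_task d tau w cfg = (case cfg of (j, rho, c) \<Rightarrow>
     map_option (\<lambda>(j', rho', f', c'). (j', rho', c'))
       (while_option (\<lambda>(j', rho', f', c'). 0 < f') (fta_step d tau w) (j, rho, 1, c)))"

fun fta_conf :: "('s \<Rightarrow> 's \<Rightarrow> real) \<Rightarrow> (nat \<Rightarrow> 's) \<Rightarrow> (nat \<Rightarrow> 's \<Rightarrow> real) \<Rightarrow> nat
    \<Rightarrow> (nat \<times> real \<times> real) option" where
  "fta_conf d tau w 0 = Some (1, 0, 0)"
| "fta_conf d tau w (Suc i) = Option.bind (fta_conf d tau w i) (fta_task d tau (w (Suc i)))"

definition fta_pos :: "('s \<Rightarrow> 's \<Rightarrow> real) \<Rightarrow> (nat \<Rightarrow> 's) \<Rightarrow> (nat \<Rightarrow> 's \<Rightarrow> real) \<Rightarrow> nat \<Rightarrow> nat" where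
  "fta_pos d tau w i = fst (the (fta_conf d tau w i))"

definition fta_cost :: "('s \<Rightarrow> 's \<Rightarrow> real) \<Rightarrow> (nat \<Rightarrow> 's) \<Rightarrow> (nat \<Rightarrow> 's \<Rightarrow> real) \<Rightarrow> nat \<Rightarrow> real" where
  "fta_cost d tau w n = snd (snd (the (fta_conf d tau w n))) + delta d tau 1 (fta_pos d tau w n)"

text \<open>Modified cost c~(j) for j >= j_min (for j < j_min it is infinite and irrelevant).\<close>

definition ctilde :: "('s \<Rightarrow> 's \<Rightarrow> real) \<Rightarrow> (nat \<Rightarrow> 's) \<Rightarrow> ('s \<Rightarrow> real) \<Rightarrow> nat \<Rightarrow> nat \<Rightarrow> real" where
  "ctilde d tau w jmax j = w (tau j) + (if j \<le> jmax then 0 else delta d tau jmax j)"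

text \<open>ell is a valid run (with some tie-breaking) of the follow-the-traversal algorithm
  on tasks w 1..w n, run alongside the FTA.\<close>

definition follow_run :: "('s \<Rightarrow> 's \<Rightarrow> real) \<Rightarrow> (nat \<Rightarrow> 's) \<Rightarrow> (nat \<Rightarrow> 's \<Rightarrow> real) \<Rightarrow> nat
    \<Rightarrow> (nat \<Rightarrow> nat) \<Rightarrow> bool" where
  "follow_run d tau w n ell \<longleftrightarrow> ell 0 = 1 \<and>
     (\<forall>i \<in> {1..n}.
        let jmin = min (ell (i - 1)) (fta_pos d tau w (i - 1));
            jmax = max (ell (i - 1)) (fta_pos d tau w (i - 1))
        in jmin \<le> ell i \<and> (\<forall>j \<ge> jmin. ctilde d tau (w i) jmax (ell i) \<le> ctilde d tau (w i) jmax j))"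

definition follow_cost :: "('s \<Rightarrow> 's \<Rightarrow> real) \<Rightarrow> (nat \<Rightarrow> 's) \<Rightarrow> (nat \<Rightarrow> 's \<Rightarrow> real) \<Rightarrow> nat
    \<Rightarrow> (nat \<Rightarrow> nat) \<Rightarrow> real" where
  "follow_cost d tau w n ell = (\<Sum>i = 1..n. d (tau (ell (i - 1))) (tau (ell i)) + w i (tau (ell i)))"

end

theory Submission
  imports Defs
begin

text \<open>Potential argument with potential \<open>\<delta>(\<ell>\<^sub>i, t\<^sub>i)\<close>, the distance along \<open>\<tau>\<close>
  between the two algorithms.  While processing task \<open>i\<close> the FTA moves forward from \<open>t\<^sub>i\<^sub>-\<^sub>1\<close>
  to \<open>t\<^sub>i\<close> and pays at least \<open>w\<^sup>i(\<tau>\<^sub>k)\<close> for some \<open>k\<close> it passed.  Measuring positions by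
  arc length along \<open>\<tau>\<close>, the choice of \<open>\<ell>\<^sub>i\<close> as a minimiser of \<open>c\<^sup>~\<close> compared with this \<open>k\<close>
  shows that the cost of the follower plus the change of potential is at most twice the
  processing and movement cost of the FTA in that step.\<close>

definition fta_loop_inv :: "('s \<Rightarrow> 's \<Rightarrow> real) \<Rightarrow> (nat \<Rightarrow> 's) \<Rightarrow> ('s \<Rightarrow> real) \<Rightarrow> nat \<Rightarrow> real
    \<Rightarrow> nat \<times> real \<times> real \<times> real \<Rightarrow> bool" where
  "fta_loop_inv d tau w j c cfg = (case cfg of (j1, r1, f1, c1) \<Rightarrow>
     j \<le> j1 \<and> 0 \<le> r1 \<and> r1 \<le> d (tau j1) (tau (Suc j1)) \<and> 0 \<le> f1 \<and> f1 \<le> 1 \<and>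
     (\<exists>k. j \<le> k \<and> k \<le> j1 \<and> (1 - f1) * w (tau k) \<le> c1 - c))"

text \<open>The last conjunct: the work done since the start \<open>(j, c)\<close> of the task pays for the
  processed fraction \<open>1 - f1\<close> at the rate of some state visited meanwhile.\<close>

lemma fta_step_preserves_inv:
  assumes w_nonneg: "\<forall>s. 0 \<le> w s" and d_nonneg: "\<forall>s t. 0 \<le> d s t"
    and inv: "fta_loop_inv d tau w j c (j1, r1, f1, c1)" and "0 < f1"
  shows "fta_loop_inv d tau w j c (fta_step d tau w (j1, r1, f1, c1))"
proof -
  define dj where "dj = d (tau j1) (tau (Suc j1))"
  define wj where "wj = w (tau j1)"
  define lam where "lam = (if wj = 0 then f1 else min ((dj - r1) / wj) f1)"
  have step: "fta_step d tau w (j1, r1, f1, c1) =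
      (if r1 + lam * wj = dj then (Suc j1, 0, f1 - lam, c1 + lam * wj)
       else (j1, r1 + lam * wj, f1 - lam, c1 + lam * wj))"
    unfolding fta_step_def dj_def wj_def lam_def Let_def by simp
  from inv have "j \<le> j1" "0 \<le> r1" "r1 \<le> dj" "f1 \<le> 1"
    and "\<exists>k. j \<le> k \<and> k \<le> j1 \<and> (1 - f1) * w (tau k) \<le> c1 - c"
    unfolding fta_loop_inv_def dj_def by auto
  then obtain k where k: "j \<le> k" "k \<le> j1" "(1 - f1) * w (tau k) \<le> c1 - c" by blast
  have "0 \<le> wj" using w_nonneg wj_def by auto
  have "0 \<le> lam" "lam \<le> f1"
    using \<open>0 < f1\<close> \<open>r1 \<le> dj\<close> \<open>0 \<le> wj\<close> by (auto simp: lam_def)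
  have work_le: "lam * wj \<le> dj - r1"
  proof (cases "wj = 0")
    case False
    then have "lam \<le> (dj - r1) / wj" by (simp add: lam_def)
    with False \<open>0 \<le> wj\<close> show ?thesis by (simp add: pos_le_divide_eq)
  qed (use \<open>r1 \<le> dj\<close> in simp)
  have paid: "\<exists>k'. j \<le> k' \<and> k' \<le> j1 \<and> (1 - (f1 - lam)) * w (tau k') \<le> c1 + lam * wj - c"
  proof (cases "wj \<le> w (tau k)")
    case True
    then have "(1 - f1) * wj \<le> (1 - f1) * w (tau k)"
      using \<open>f1 \<le> 1\<close> by (simp add: mult_left_mono)
    then show ?thesis using k(3) \<open>j \<le> j1\<close> by (auto simp: wj_def algebra_simps)
  next
    case False
    then have "lam * w (tau k) \<le> lam * wj" using \<open>0 \<le> lam\<close> by (simp add: mult_left_mono)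
    then show ?thesis using k by (auto simp: algebra_simps)
  qed
  have "0 \<le> d (tau (Suc j1)) (tau (Suc (Suc j1)))" using d_nonneg by auto
  then show ?thesis
    using step paid work_le \<open>j \<le> j1\<close> \<open>0 \<le> r1\<close> \<open>0 \<le> wj\<close> \<open>0 \<le> lam\<close> \<open>lam \<le> f1\<close> \<open>f1 \<le> 1\<close>
    unfolding fta_loop_inv_def dj_def by (auto intro: le_SucI)
qed

lemma fta_task_visits_cheap_state:
  assumes "\<forall>s. 0 \<le> w s" and "\<forall>s t. 0 \<le> d s t"
    and "0 \<le> rho" and "rho \<le> d (tau j) (tau (Suc j))"
    and task: "fta_task d tau w (j, rho, c) = Some (j', rho', c')"
  shows "j \<le> j' \<and> 0 \<le> rho' \<and> rho' \<le> d (tau j') (tau (Suc j'))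
    \<and> (\<exists>k. j \<le> k \<and> k \<le> j' \<and> w (tau k) \<le> c' - c)"
proof -
  from task obtain f' where loop:
    "while_option (\<lambda>(_, _, f, _). 0 < f) (fta_step d tau w) (j, rho, 1, c) = Some (j', rho', f', c')"
    unfolding fta_task_def by (auto split: prod.splits)
  have "fta_loop_inv d tau w j c (j', rho', f', c')"
  proof (rule while_option_rule[OF _ loop])
    fix cfg assume "fta_loop_inv d tau w j c cfg" "(\<lambda>(_, _, f, _). 0 < f) cfg"
    then show "fta_loop_inv d tau w j c (fta_step d tau w cfg)"
      using fta_step_preserves_inv[OF assms(1,2)] by (cases cfg) auto
  qed (use assms(3,4) in \<open>auto simp: fta_loop_inv_def\<close>)
  moreover have "\<not> 0 < f'" using while_option_stop[OF loop] by simp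
  ultimately show ?thesis unfolding fta_loop_inv_def by auto
qed

lemma fta_conf_wf:
  assumes "\<forall>s t. 0 \<le> d s t" and "\<forall>i \<in> {1..m}. \<forall>s. 0 \<le> w i s"
    and "fta_conf d tau w m = Some (t, r, c)"
  shows "1 \<le> t \<and> 0 \<le> r \<and> r \<le> d (tau t) (tau (Suc t))"
  using assms(2,3)
proof (induction m arbitrary: t r c)
  case (Suc m)
  then obtain t0 r0 c0 where conf: "fta_conf d tau w m = Some (t0, r0, c0)"
    and task: "fta_task d tau (w (Suc m)) (t0, r0, c0) = Some (t, r, c)"
    by (cases "fta_conf d tau w m") auto
  have "1 \<le> t0 \<and> 0 \<le> r0 \<and> r0 \<le> d (tau t0) (tau (Suc t0))"
    using Suc.IH Suc.prems(1) conf by simp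
  moreover have "\<forall>s. 0 \<le> w (Suc m) s" using Suc.prems(1) by simp
  ultimately show ?case
    using fta_task_visits_cheap_state[OF _ assms(1) _ _ task] by fastforce
qed (use assms(1) in simp)

lemma fta_conf_Suc_visits_cheap_state:
  assumes "\<forall>s t. 0 \<le> d s t" and "\<forall>i \<in> {1..Suc m}. \<forall>s. 0 \<le> w i s"
    and "fta_conf d tau w (Suc m) = Some (t', r', c')"
  obtains t r c k where "fta_conf d tau w m = Some (t, r, c)"
    and "t \<le> k" and "k \<le> t'" and "w (Suc m) (tau k) \<le> c' - c"
proof -
  from assms(3) obtain t r c where conf: "fta_conf d tau w m = Some (t, r, c)"
    and task: "fta_task d tau (w (Suc m)) (t, r, c) = Some (t', r', c')"
    by (cases "fta_conf d tau w m") auto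
  have "0 \<le> r \<and> r \<le> d (tau t) (tau (Suc t))"
    using fta_conf_wf[OF assms(1) _ conf] assms(2) by simp
  with fta_task_visits_cheap_state[OF _ assms(1) _ _ task] assms(2) conf that show ?thesis
    by fastforce
qed

definition trav_pos :: "('s \<Rightarrow> 's \<Rightarrow> real) \<Rightarrow> (nat \<Rightarrow> 's) \<Rightarrow> nat \<Rightarrow> real" where
  "trav_pos d tau x = (\<Sum>j<x. d (tau j) (tau (Suc j)))"

lemma sum_traversal_eq_trav_pos_diff:
  "l \<le> l' \<Longrightarrow> (\<Sum>j = l..<l'. d (tau j) (tau (Suc j))) = trav_pos d tau l' - trav_pos d tau l"
  unfolding trav_pos_def lessThan_atLeast0
  using sum.atLeastLessThan_concat[of 0 l l' "\<lambda>j. d (tau j) (tau (Suc j))"] by simp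

lemma trav_pos_mono:
  assumes "\<forall>s t. 0 \<le> d s t" and "l \<le> l'"
  shows "trav_pos d tau l \<le> trav_pos d tau l'"
proof -
  have "0 \<le> (\<Sum>j = l..<l'. d (tau j) (tau (Suc j)))" using assms(1) by (simp add: sum_nonneg)
  then show ?thesis using sum_traversal_eq_trav_pos_diff[OF assms(2), of d tau] by simp
qed

lemma delta_eq_abs_trav_pos:
  assumes "\<forall>s t. 0 \<le> d s t"
  shows "delta d tau l l' = \<bar>trav_pos d tau l - trav_pos d tau l'\<bar>"
  using sum_traversal_eq_trav_pos_diff[of "min l l'" "max l l'" d tau]
    trav_pos_mono[OF assms, of l l' tau] trav_pos_mono[OF assms, of l' l tau]
  unfolding delta_def by (cases "l \<le> l'") (auto simp: min_def max_def)

lemma delta_add: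
  "l \<le> m \<Longrightarrow> m \<le> r \<Longrightarrow> delta d tau l r = delta d tau l m + delta d tau m r"
  unfolding delta_def by (simp add: sum.atLeastLessThan_concat)

lemma dist_le_sum_traversal:
  assumes "metric_ts d" and "a \<le> b"
  shows "d (tau a) (tau b) \<le> (\<Sum>j = a..<b. d (tau j) (tau (Suc j)))"
  using assms(2)
proof (induction b rule: dec_induct)
  case (step b)
  have "d (tau a) (tau (Suc b)) \<le> d (tau a) (tau b) + d (tau b) (tau (Suc b))"
    using assms(1) by (simp add: metric_ts_def)
  with step show ?case by simp
qed (use assms(1) in \<open>simp add: metric_ts_def\<close>)

lemma dist_le_delta:
  assumes "metric_ts d"
  shows "d (tau a) (tau b) \<le> delta d tau a b"
proof -
  have "d (tau a) (tau b) = d (tau (min a b)) (tau (max a b))"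
    using assms by (cases "a \<le> b") (simp_all add: metric_ts_def min_def max_def)
  then show ?thesis using dist_le_sum_traversal[OF assms] by (simp add: delta_def)
qed

lemma ctilde_eq_trav_pos:
  assumes "\<forall>s t. 0 \<le> d s t"
  shows "ctilde d tau v jm j = v (tau j) + max 0 (trav_pos d tau j - trav_pos d tau jm)"
  using trav_pos_mono[OF assms, of j jm tau] trav_pos_mono[OF assms, of jm j tau]
    delta_eq_abs_trav_pos[OF assms, of tau jm j]
  by (cases "j \<le> jm") (auto simp: ctilde_def)

lemma trav_pos_max_min:
  assumes "\<forall>s t. 0 \<le> d s t"
  shows "trav_pos d tau (max a b) = max (trav_pos d tau a) (trav_pos d tau b)"
    and "trav_pos d tau (min a b) = min (trav_pos d tau a) (trav_pos d tau b)"
  using trav_pos_mono[OF assms, of a b tau] trav_pos_mono[OF assms, of b a tau]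
  by (cases "a \<le> b"; simp add: max_def min_def)+

text \<open>Positions by arc length: the follower moves from \<open>A\<close> to \<open>B\<close>, the FTA from \<open>T\<close> to \<open>T'\<close>
  paying \<open>p\<close>, having passed \<open>J\<close> with cost \<open>wj\<close>.  The potential gain of the follower is at
  most \<open>T' - T\<close> unless it overshoots \<open>max A T\<close>, in which case the overshoot, charged twice,
  is paid for by the minimality of \<open>c\<^sup>~\<close>.\<close>

lemma follow_step_arith:
  fixes A B T T' J wb wj p :: real
  assumes "min A T \<le> B" and "T \<le> J" and "J \<le> T'" and "0 \<le> wb" and "0 \<le> wj"
    and minimal: "wb + max 0 (B - max A T) \<le> wj + max 0 (J - max A T)" and "wj \<le> p"
  shows "\<bar>A - B\<bar> + wb + \<bar>B - T'\<bar> - \<bar>A - T\<bar> \<le> 2 * p + 2 * (T' - T)"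
proof -
  have "T \<le> T'" using assms(2,3) by simp
  have overshoot_paid: "wb + max 0 (B - max A T) \<le> p + (T' - T)"
    using minimal assms(2,3,7) by linarith
  show ?thesis
  proof (cases "B \<le> max A T \<or> B \<le> T'")
    case True
    then have "\<bar>A - B\<bar> + \<bar>B - T'\<bar> - \<bar>A - T\<bar> \<le> T' - T"
      using assms(1-3) by (smt (verit))
    then show ?thesis
      using overshoot_paid \<open>T \<le> T'\<close> \<open>0 \<le> wj\<close> \<open>wj \<le> p\<close> by (smt (verit))
  next
    case False
    then have "\<bar>A - B\<bar> + \<bar>B - T'\<bar> - \<bar>A - T\<bar> = 2 * (B - max A T) - (T' - T)"
      using assms(2,3) by (smt (verit))
    then show ?thesis using overshoot_paid \<open>0 \<le> wb\<close> \<open>T \<le> T'\<close> False by (smt (verit))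
  qed
qed

lemma follow_step_amortized:
  assumes met: "metric_ts d" and "\<forall>s. 0 \<le> v s"
    and "min a t \<le> b" and minimal: "\<forall>j \<ge> min a t. ctilde d tau v (max a t) b \<le> ctilde d tau v (max a t) j"
    and "t \<le> k" and "k \<le> t'" and "v (tau k) \<le> p"
  shows "d (tau a) (tau b) + v (tau b) + delta d tau b t' - delta d tau a t
    \<le> 2 * p + 2 * delta d tau t t'"
proof -
  have d_nonneg: "\<forall>s t. 0 \<le> d s t" using met by (simp add: metric_ts_def)
  let ?P = "trav_pos d tau"
  have "min a t \<le> k" using \<open>t \<le> k\<close> by simp
  then have "ctilde d tau v (max a t) b \<le> ctilde d tau v (max a t) k" using minimal by blast
  then have "v (tau b) + max 0 (?P b - max (?P a) (?P t)) \<le> v (tau k) + max 0 (?P k - max (?P a) (?P t))"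
    unfolding ctilde_eq_trav_pos[OF d_nonneg] trav_pos_max_min(1)[OF d_nonneg] .
  moreover have "min (?P a) (?P t) \<le> ?P b"
    using trav_pos_mono[OF d_nonneg \<open>min a t \<le> b\<close>] trav_pos_max_min(2)[OF d_nonneg] by simp
  moreover have "?P t \<le> ?P k" "?P k \<le> ?P t'"
    using trav_pos_mono[OF d_nonneg] \<open>t \<le> k\<close> \<open>k \<le> t'\<close> by auto
  ultimately have "\<bar>?P a - ?P b\<bar> + v (tau b) + \<bar>?P b - ?P t'\<bar> - \<bar>?P a - ?P t\<bar> \<le> 2 * p + 2 * (?P t' - ?P t)"
    by (intro follow_step_arith) (use \<open>\<forall>s. 0 \<le> v s\<close> \<open>v (tau k) \<le> p\<close> in auto)
  moreover have "?P t \<le> ?P t'" using \<open>?P t \<le> ?P k\<close> \<open>?P k \<le> ?P t'\<close> by linarith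
  ultimately show ?thesis
    using dist_le_delta[OF met, of tau a b]
    unfolding delta_eq_abs_trav_pos[OF d_nonneg] by simp
qed

lemma follow_cost_amortized:
  assumes met: "metric_ts d" and w_nonneg: "\<forall>i \<in> {1..n}. \<forall>s. 0 \<le> w i s"
    and run: "follow_run d tau w n ell"
  shows "i \<le> n \<Longrightarrow> fta_conf d tau w i = Some (t, r, c) \<Longrightarrow>
    follow_cost d tau w i ell + delta d tau (ell i) t \<le> 2 * (c + delta d tau 1 t)"
proof (induction i arbitrary: t r c)
  case 0
  then show ?case using run by (simp add: follow_run_def follow_cost_def delta_def)
next
  case (Suc i)
  have d_nonneg: "\<forall>s t. 0 \<le> d s t" using met by (simp add: metric_ts_def)
  have w_prefix: "\<forall>j \<in> {1..Suc i}. \<forall>s. 0 \<le> w j s" using w_nonneg Suc.prems(1) by auto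
  obtain t0 r0 c0 k where conf: "fta_conf d tau w i = Some (t0, r0, c0)"
    and "t0 \<le> k" "k \<le> t" and cheap: "w (Suc i) (tau k) \<le> c - c0"
    using fta_conf_Suc_visits_cheap_state[OF d_nonneg w_prefix Suc.prems(2)] by blast
  have IH: "follow_cost d tau w i ell + delta d tau (ell i) t0 \<le> 2 * (c0 + delta d tau 1 t0)"
    using Suc.IH Suc.prems(1) conf by simp
  have "Suc i \<in> {1..n}" using Suc.prems(1) by simp
  moreover have "fta_pos d tau w i = t0" using conf by (simp add: fta_pos_def)
  ultimately have choice: "min (ell i) t0 \<le> ell (Suc i)"
      "\<forall>j \<ge> min (ell i) t0. ctilde d tau (w (Suc i)) (max (ell i) t0) (ell (Suc i))
        \<le> ctilde d tau (w (Suc i)) (max (ell i) t0) j"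
    using run unfolding follow_run_def Let_def by fastforce+
  have "\<forall>s. 0 \<le> w (Suc i) s" using w_prefix by simp
  from follow_step_amortized[OF met this choice \<open>t0 \<le> k\<close> \<open>k \<le> t\<close> cheap]
  have step: "d (tau (ell i)) (tau (ell (Suc i))) + w (Suc i) (tau (ell (Suc i)))
      + delta d tau (ell (Suc i)) t - delta d tau (ell i) t0 \<le> 2 * (c - c0) + 2 * delta d tau t0 t" .
  have "1 \<le> t0" using fta_conf_wf[OF d_nonneg _ conf] w_prefix by simp
  then have "delta d tau 1 t = delta d tau 1 t0 + delta d tau t0 t"
    using \<open>t0 \<le> k\<close> \<open>k \<le> t\<close> by (intro delta_add) simp_all
  moreover have "follow_cost d tau w (Suc i) ell = follow_cost d tau w i ell
      + d (tau (ell i)) (tau (ell (Suc i))) + w (Suc i) (tau (ell (Suc i)))"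
    by (simp add: follow_cost_def)
  ultimately show ?case using IH step by argo
qed

theorem theorem2:
  fixes d :: "'s::finite \<Rightarrow> 's \<Rightarrow> real" and tau :: "nat \<Rightarrow> 's"
    and w :: "nat \<Rightarrow> 's \<Rightarrow> real" and n :: nat and ell :: "nat \<Rightarrow> nat"
  assumes "metric_ts d"
    and "\<forall>i \<in> {1..n}. \<forall>s. 0 \<le> w i s"
    and "fta_conf d tau w n \<noteq> None"
    and "follow_run d tau w n ell"
  shows "follow_cost d tau w n ell \<le> 2 * fta_cost d tau w n"
proof -
  obtain t r c where conf: "fta_conf d tau w n = Some (t, r, c)"
    using assms(3) by auto
  have "follow_cost d tau w n ell + delta d tau (ell n) t \<le> 2 * (c + delta d tau 1 t)"
    using follow_cost_amortized[OF assms(1,2,4) le_refl conf] .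
  moreover have "0 \<le> delta d tau (ell n) t"
    using assms(1) by (simp add: delta_def metric_ts_def sum_nonneg)
  ultimately show ?thesis using conf by (simp add: fta_cost_def fta_pos_def)
qed

end
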